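(* Let $G$ be a graph and $v\in V(G)$. Let $G^-$ be obtained from $G$ by adding a vertex $v^-$ with $N_{G^-}(v^-)=N_G(v)$, and $G^+$ be obtained by adding a vertex $v^+$ with $N_{G^+}(v^+)=N_G[v]$ (closed neighborhood). Let $\star\in\{+,-\}$, and if $\star=+$ assume $v$ is not an isolated vertex. Then $\mathcal{Z}^{\mathrm{TE}}_{\star}(G^{\star})\cong(\mathcal{Z}^{\mathrm{TE}}_{\star}(G)\,\square\,P_2)/\!\sim$, $\mathcal{Z}^{\mathrm{TS}}_+(G^+)\cong(\mathcal{Z}^{\mathrm{TS}}_+(G)\,\square\,P_2)/\!\sim$, and $\mathcal{Z}^{\mathrm{TS}}_-(G^-)\cong(2\mathcal{Z}^{\mathrm{TS}}_-(G))/\!\sim$, where $V(P_2)=\{v,v^\star\}$, the vertices of the two copies in $2\mathcal{Z}^{\mathrm{TS}}_-(G)$ are written $(B,v)$ and $(B,v^-)$ for $B$ a vertex of $\mathcal{Z}^{\mathrm{TS}}_-(G)$, and in each case $\sim$ is the equivalence relation identifying $(B,v)$ with $(B,v^{\star})$ if and only if $v\in B$.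
   Context: $\square$ denotes the Cartesian product and $2H$ the disjoint union of two copies of $H$. For an equivalence relation $\sim$ on $V(H)$, the quotient graph $H/\!\sim$ has the equivalence classes as vertices, with two distinct classes adjacent iff some member of one is adjacent in $H$ to some member of the other. PSD forcing ($\star=+$): if $B$ is the current blue set, $C$ a component of $G-B$, and $u$ a blue vertex with $N_G(u)\cap V(C)=\{w\}$, then $u$ may force $w$ blue. Skew forcing ($\star=-$): any vertex $u$ (blue or white) with exactly one white neighbor $w$ may force $w$ blue. A $\mathrm{Z}_\star$-forcing set is a (possibly empty) set of initially blue vertices from which repeated forcing turns all vertices blue; $\mathrm{Z}_\star(G)$ is the minimum size. $\mathcal{Z}^{\mathrm{TE}}_\star(G)$ has as vertices the minimum $\mathrm{Z}_\star$-forcing sets of $G$, with $S_1S_2$ an edge iff $S_1\setminus S_2=\{v_1\}$ and $S_2\setminus S_1=\{v_2\}$ for some vertices $v_1,v_2$; $\mathcal{Z}^{\mathrm{TS}}_\star(G)$ has the same vertices with the additional requirement $v_1v_2\in E(G)$. *)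

theory Defs
  imports Main
begin

record 'a graph =
  verts :: "'a set"
  adj :: "'a \<Rightarrow> 'a \<Rightarrow> bool"

definition simple_graph :: "'a graph \<Rightarrow> bool" where
  "simple_graph G \<longleftrightarrow> finite (verts G) \<and>
     (\<forall>x y. adj G x y \<longrightarrow> x \<in> verts G \<and> y \<in> verts G \<and> x \<noteq> y \<and> adj G y x)"

definition nbhd :: "'a graph \<Rightarrow> 'a \<Rightarrow> 'a set" where
  "nbhd G u = {w. adj G u w}"

definition isolated :: "'a graph \<Rightarrow> 'a \<Rightarrow> bool" where
  "isolated G v \<longleftrightarrow> nbhd G v = {}"

definition graph_iso :: "'a graph \<Rightarrow> 'b graph \<Rightarrow> bool" (infix "\<cong>\<^sub>g" 50) where
  "G \<cong>\<^sub>g H \<longleftrightarrow> (\<exists>f. bij_betw f (verts G) (verts H) \<and>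
      (\<forall>x\<in>verts G. \<forall>y\<in>verts G. adj G x y \<longleftrightarrow> adj H (f x) (f y)))"

definition add_twin_minus :: "'a graph \<Rightarrow> 'a \<Rightarrow> 'a \<Rightarrow> 'a graph" where
  "add_twin_minus G v x = \<lparr> verts = insert x (verts G),
     adj = (\<lambda>a b. adj G a b \<or> (a = x \<and> adj G v b) \<or> (b = x \<and> adj G v a)) \<rparr>"

definition add_twin_plus :: "'a graph \<Rightarrow> 'a \<Rightarrow> 'a \<Rightarrow> 'a graph" where
  "add_twin_plus G v x = \<lparr> verts = insert x (verts G),
     adj = (\<lambda>a b. adj G a b \<or> (a = x \<and> (adj G v b \<or> b = v)) \<or> (b = x \<and> (adj G v a \<or> a = v))) \<rparr>"

text \<open>Forcing rules: PSD (Plus) and skew (Minus).\<close>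

datatype sign = Plus | Minus

definition comp_minus :: "'a graph \<Rightarrow> 'a set \<Rightarrow> 'a \<Rightarrow> 'a set" where
  "comp_minus G B w = {y. (\<lambda>a b. adj G a b \<and> a \<notin> B \<and> b \<notin> B)\<^sup>*\<^sup>* w y}"

definition force_step :: "sign \<Rightarrow> 'a graph \<Rightarrow> 'a set \<Rightarrow> 'a \<Rightarrow> bool" where
  "force_step s G B w \<longleftrightarrow> w \<in> verts G \<and> w \<notin> B \<and>
     (\<exists>u \<in> verts G. case s of
        Plus \<Rightarrow> u \<in> B \<and> nbhd G u \<inter> comp_minus G B w = {w}
      | Minus \<Rightarrow> {y. adj G u y \<and> y \<notin> B} = {w})"

inductive reachable_blue :: "sign \<Rightarrow> 'a graph \<Rightarrow> 'a set \<Rightarrow> 'a set \<Rightarrow> bool"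
  for s G S where
  start: "reachable_blue s G S S"
| step: "reachable_blue s G S B \<Longrightarrow> force_step s G B w \<Longrightarrow> reachable_blue s G S (insert w B)"

definition forcing_set :: "sign \<Rightarrow> 'a graph \<Rightarrow> 'a set \<Rightarrow> bool" where
  "forcing_set s G S \<longleftrightarrow> S \<subseteq> verts G \<and> reachable_blue s G S (verts G)"

definition zf_number :: "sign \<Rightarrow> 'a graph \<Rightarrow> nat" where
  "zf_number s G = (LEAST k. \<exists>S. forcing_set s G S \<and> card S = k)"

definition min_forcing_sets :: "sign \<Rightarrow> 'a graph \<Rightarrow> 'a set set" where
  "min_forcing_sets s G = {S. forcing_set s G S \<and> card S = zf_number s G}"

definition ZTE :: "sign \<Rightarrow> 'a graph \<Rightarrow> 'a set graph" where
  "ZTE s G = \<lparr> verts = min_forcing_sets s G,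
     adj = (\<lambda>S1 S2. S1 \<in> min_forcing_sets s G \<and> S2 \<in> min_forcing_sets s G \<and>
        (\<exists>v1 v2. S1 - S2 = {v1} \<and> S2 - S1 = {v2})) \<rparr>"

definition ZTS :: "sign \<Rightarrow> 'a graph \<Rightarrow> 'a set graph" where
  "ZTS s G = \<lparr> verts = min_forcing_sets s G,
     adj = (\<lambda>S1 S2. S1 \<in> min_forcing_sets s G \<and> S2 \<in> min_forcing_sets s G \<and>
        (\<exists>v1 v2. S1 - S2 = {v1} \<and> S2 - S1 = {v2} \<and> adj G v1 v2)) \<rparr>"

definition cart_prod :: "'a graph \<Rightarrow> 'b graph \<Rightarrow> ('a \<times> 'b) graph" where
  "cart_prod H K = \<lparr> verts = verts H \<times> verts K,
     adj = (\<lambda>(x1, y1) (x2, y2). x1 \<in> verts H \<and> x2 \<in> verts H \<and> y1 \<in> verts K \<and> y2 \<in> verts K \<and>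
        ((x1 = x2 \<and> adj K y1 y2) \<or> (y1 = y2 \<and> adj H x1 x2))) \<rparr>"

definition P2 :: "'a \<Rightarrow> 'a \<Rightarrow> 'a graph" where
  "P2 a b = \<lparr> verts = {a, b}, adj = (\<lambda>x y. x \<noteq> y \<and> {x, y} = {a, b}) \<rparr>"

definition two_copies :: "'a graph \<Rightarrow> 'b \<Rightarrow> 'b \<Rightarrow> ('a \<times> 'b) graph" where
  "two_copies H a b = \<lparr> verts = verts H \<times> {a, b},
     adj = (\<lambda>(x1, i) (x2, j). i \<in> {a, b} \<and> i = j \<and> adj H x1 x2) \<rparr>"

definition quotient_graph :: "'a graph \<Rightarrow> ('a \<times> 'a) set \<Rightarrow> 'a set graph" where
  "quotient_graph H R = \<lparr> verts = verts H // R,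
     adj = (\<lambda>X Y. X \<in> verts H // R \<and> Y \<in> verts H // R \<and> X \<noteq> Y \<and>
        (\<exists>x\<in>X. \<exists>y\<in>Y. adj H x y)) \<rparr>"

definition ident_rel :: "('b set \<times> 'b) set \<Rightarrow> 'b \<Rightarrow> ('b set \<times> 'b) rel" where
  "ident_rel W v = {(p, q). p \<in> W \<and> q \<in> W \<and> (p = q \<or> (fst p = fst q \<and> v \<in> fst p))}"

end

theory Submission
  imports Defs "HOL-Combinatorics.Transposition"
begin

(* The new vertex x is a twin of v in Gstar, so the transposition of v and x is an automorphism
   of Gstar.  A vertex that could force one of v, x while both are white would see both of them,
   so every forcing set of Gstar contains v or x, and after the automorphism it contains x.  Once
   x is blue, forces by other vertices are forces in G, and a force by x can be performed by v,
   except a PSD force of a white v by x; then all neighbours of v are blue and, v not being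
   isolated, one of them forces v in G instead.
   Hence the forcing sets of Gstar containing x are exactly the sets B + x with B a forcing set
   of G, the forcing number goes up by one, and the minimum forcing sets of Gstar are the sets
   B + x and their automorphic images, for B a minimum forcing set of G; the two coincide iff v is
   in B.  Labelling them (B, v) and (B, x) yields the quotient map: a token move between such sets
   is a move inside one copy, or the exchange of x for v, which is a slide iff x and v are
   adjacent, i.e. for PSD forcing. *)

section \<open>Forcing\<close>

definition forces :: "sign \<Rightarrow> 'a graph \<Rightarrow> 'a set \<Rightarrow> 'a \<Rightarrow> 'a \<Rightarrow> bool" where
  "forces s G B u w \<longleftrightarrow> (case s of
      Plus \<Rightarrow> u \<in> B \<and> nbhd G u \<inter> comp_minus G B w = {w}
    | Minus \<Rightarrow> {y. adj G u y \<and> y \<notin> B} = {w})"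

lemma force_step_iff_forces:
  "force_step s G B w \<longleftrightarrow> w \<in> verts G \<and> w \<notin> B \<and> (\<exists>u\<in>verts G. forces s G B u w)"
  by (simp add: force_step_def forces_def)

lemma self_in_comp_minus: "w \<in> comp_minus G B w"
  by (simp add: comp_minus_def)

lemma comp_minus_step:
  "y \<in> comp_minus G B w \<Longrightarrow> adj G y z \<Longrightarrow> y \<notin> B \<Longrightarrow> z \<notin> B \<Longrightarrow> z \<in> comp_minus G B w"
  by (simp add: comp_minus_def rtranclp.rtrancl_into_rtrancl)

lemma comp_minus_disjoint:
  assumes "w \<notin> B"
  shows "comp_minus G B w \<inter> B = {}"
proof -
  have "y \<notin> B" if "(\<lambda>a b. adj G a b \<and> a \<notin> B \<and> b \<notin> B)\<^sup>*\<^sup>* w y" for y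
    using that assms by (induction rule: rtranclp_induct) auto
  then show ?thesis unfolding comp_minus_def by blast
qed

lemma comp_minus_subset_singleton: "nbhd G w \<subseteq> B \<Longrightarrow> comp_minus G B w \<subseteq> {w}"
  by (auto simp: comp_minus_def nbhd_def elim: converse_rtranclpE)

lemma ex_forces_Plus_if_nbhd_blue:
  assumes "simple_graph G" "\<not> isolated G v" "v \<notin> B" "nbhd G v \<subseteq> B"
  shows "\<exists>u\<in>verts G. forces Plus G B u v"
proof -
  obtain u where "adj G v u"
    using assms(2) by (auto simp: isolated_def nbhd_def)
  then have u: "u \<in> verts G" "u \<in> B" "v \<in> nbhd G u"
    using assms(1,4) by (auto simp: simple_graph_def nbhd_def)
  have "comp_minus G B v = {v}"
    using comp_minus_subset_singleton[OF assms(4)] self_in_comp_minus[of v G B] by blast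
  then have "forces Plus G B u v"
    using u by (auto simp: forces_def)
  then show ?thesis using u by blast
qed

lemma closed_nbhd_Int_comp_minus_eq_singletonD:
  assumes simple: "simple_graph G" and white: "v \<notin> B" "w \<notin> B"
    and C: "insert v (nbhd G v) \<inter> comp_minus G B w = {w}"
  shows "w = v \<and> nbhd G v \<subseteq> B"
proof -
  have adj: "adj G a b \<Longrightarrow> a \<noteq> b \<and> adj G b a" for a b
    using simple by (auto simp: simple_graph_def)
  have only_w: "y = w" if "y \<in> insert v (nbhd G v)" "y \<in> comp_minus G B w" for y
    using C that by (metis IntI singletonD)
  have v_in_C: "v \<in> comp_minus G B w"
  proof (cases "w = v")
    case False
    then have "adj G w v" using C adj by (auto simp: nbhd_def)
    from comp_minus_step[OF self_in_comp_minus this white(2,1)] show ?thesis .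
  qed (simp add: self_in_comp_minus)
  then have "w = v" using only_w[of v] by simp
  moreover have "b \<in> B" if b: "b \<in> nbhd G v" for b
  proof (rule ccontr)
    assume "b \<notin> B"
    then have "b \<in> comp_minus G B w"
      using comp_minus_step[OF v_in_C] b white(1) by (auto simp: nbhd_def)
    then have "b = v" using only_w b \<open>w = v\<close> by simp
    then show False using b adj by (auto simp: nbhd_def)
  qed
  ultimately show ?thesis by blast
qed

lemma reachable_blue_subset:
  "reachable_blue s G S B \<Longrightarrow> S \<subseteq> verts G \<Longrightarrow> B \<subseteq> verts G"
  by (induction rule: reachable_blue.induct) (auto simp: force_step_def)

lemma zf_number_le_card: "forcing_set s G S \<Longrightarrow> zf_number s G \<le> card S"
  unfolding zf_number_def by (blast intro: Least_le)

lemma min_forcing_sets_nonempty: "min_forcing_sets s G \<noteq> {}"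
proof -
  have "forcing_set s G (verts G)"
    by (simp add: forcing_set_def reachable_blue.start)
  then have "\<exists>S. forcing_set s G S \<and> card S = zf_number s G"
    unfolding zf_number_def
    using LeastI_ex[of "\<lambda>k. \<exists>S. forcing_set s G S \<and> card S = k"] by blast
  then show ?thesis by (auto simp: min_forcing_sets_def)
qed

section \<open>Invariance under isomorphisms\<close>

lemma rtranclp_bij_iff:
  assumes "bij h" and "\<And>a b. R (h a) (h b) \<longleftrightarrow> S a b"
  shows "R\<^sup>*\<^sup>* (h a) (h b) \<longleftrightarrow> S\<^sup>*\<^sup>* a b"
proof
  have "R\<^sup>*\<^sup>* c d \<Longrightarrow> S\<^sup>*\<^sup>* (inv h c) (inv h d)" for c d
  proof (induction rule: rtranclp_induct)
    case (step d e)
    have "S (inv h d) (inv h e)"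
      using step.hyps(2) assms by (metis bij_inv_eq_iff)
    with step.IH show ?case by (rule rtranclp.rtrancl_into_rtrancl)
  qed simp
  then show "R\<^sup>*\<^sup>* (h a) (h b) \<Longrightarrow> S\<^sup>*\<^sup>* a b"
    using assms(1) by (metis bij_inv_eq_iff)
next
  show "S\<^sup>*\<^sup>* a b \<Longrightarrow> R\<^sup>*\<^sup>* (h a) (h b)"
    by (induction rule: rtranclp_induct) (auto simp: assms(2) intro: rtranclp.rtrancl_into_rtrancl)
qed

lemma bij_image_eqI:
  assumes "bij h" and "\<And>b. h b \<in> A \<longleftrightarrow> b \<in> C"
  shows "A = h ` C"
proof (intro set_eqI)
  fix c
  have c: "c = h (inv h c)"
    using assms(1) by (simp add: bij_is_surj surj_f_inv_f)
  then have "c \<in> A \<longleftrightarrow> inv h c \<in> C"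
    using assms(2)[of "inv h c"] by simp
  also have "\<dots> \<longleftrightarrow> c \<in> h ` C"
    using inj_image_mem_iff[OF bij_is_inj[OF assms(1)], of "inv h c" C] c by simp
  finally show "c \<in> A \<longleftrightarrow> c \<in> h ` C" .
qed

context
  fixes h :: "'a \<Rightarrow> 'b" and H :: "'b graph" and K :: "'a graph"
  assumes bij: "bij h" and adj_iso: "\<And>a b. adj H (h a) (h b) \<longleftrightarrow> adj K a b"
begin

lemma comp_minus_bij_image: "comp_minus H (h ` B) (h w) = h ` comp_minus K B w"
proof (rule bij_image_eqI[OF bij])
  show "h b \<in> comp_minus H (h ` B) (h w) \<longleftrightarrow> b \<in> comp_minus K B w" for b
    unfolding comp_minus_def mem_Collect_eq
    by (rule rtranclp_bij_iff[OF bij]) (simp add: adj_iso inj_image_mem_iff[OF bij_is_inj[OF bij]])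
qed

lemma nbhd_bij_image: "nbhd H (h u) = h ` nbhd K u"
  by (rule bij_image_eqI[OF bij]) (simp add: nbhd_def adj_iso)

lemma forces_bij_image: "forces s H (h ` B) (h u) (h w) \<longleftrightarrow> forces s K B u w"
proof -
  have inj: "inj h" using bij by (rule bij_is_inj)
  have white_nbhd: "{y. adj H (h u) y \<and> y \<notin> h ` B} = h ` {y. adj K u y \<and> y \<notin> B}"
    by (rule bij_image_eqI[OF bij]) (simp add: adj_iso inj_image_mem_iff[OF inj])
  have "h ` A = {h w} \<longleftrightarrow> A = {w}" for A
    using inj_image_eq_iff[OF inj, of A "{w}"] by simp
  then show ?thesis
    by (cases s) (simp_all add: forces_def white_nbhd nbhd_bij_image comp_minus_bij_image
        inj_image_mem_iff[OF inj] image_Int[OF inj, symmetric])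
qed

lemma reachable_blue_bij_image:
  assumes "verts H = h ` verts K"
  shows "reachable_blue s K S B \<Longrightarrow> reachable_blue s H (h ` S) (h ` B)"
proof (induction rule: reachable_blue.induct)
  case (step B w)
  have "force_step s H (h ` B) (h w)"
    using step.hyps(2) bij_is_inj[OF bij] assms
    by (auto simp: force_step_iff_forces forces_bij_image inj_image_mem_iff)
  with step.IH show ?case by (simp add: reachable_blue.step)
qed (rule reachable_blue.start)

lemma forcing_set_bij_image:
  "verts H = h ` verts K \<Longrightarrow> forcing_set s K S \<Longrightarrow> forcing_set s H (h ` S)"
  unfolding forcing_set_def using reachable_blue_bij_image by (metis image_mono)

end

definition token_exchange :: "('a \<Rightarrow> 'a \<Rightarrow> bool) \<Rightarrow> 'a set \<Rightarrow> 'a set \<Rightarrow> bool" where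
  "token_exchange P S T \<longleftrightarrow> (\<exists>a b. S - T = {a} \<and> T - S = {b} \<and> P a b)"

definition token_graph :: "('a \<Rightarrow> 'a \<Rightarrow> bool) \<Rightarrow> sign \<Rightarrow> 'a graph \<Rightarrow> 'a set graph" where
  "token_graph P s G = \<lparr>verts = min_forcing_sets s G,
     adj = (\<lambda>S T. S \<in> min_forcing_sets s G \<and> T \<in> min_forcing_sets s G \<and> token_exchange P S T)\<rparr>"

lemma verts_token_graph [simp]: "verts (token_graph P s G) = min_forcing_sets s G"
  by (simp add: token_graph_def)

lemma adj_token_graph [simp]:
  "S \<in> min_forcing_sets s G \<Longrightarrow> T \<in> min_forcing_sets s G \<Longrightarrow>
    adj (token_graph P s G) S T \<longleftrightarrow> token_exchange P S T"
  by (simp add: token_graph_def)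

lemma ZTE_eq_token_graph: "ZTE s G = token_graph (\<lambda>_ _. True) s G"
  by (simp add: ZTE_def token_graph_def token_exchange_def)

lemma ZTS_eq_token_graph: "ZTS s G = token_graph (adj G) s G"
  by (simp add: ZTS_def token_graph_def token_exchange_def)

lemma token_exchange_neq: "token_exchange P S T \<Longrightarrow> S \<noteq> T"
  by (auto simp: token_exchange_def)

lemma inj_image_eq_singleton_iff:
  assumes "inj h"
  shows "h ` A = {c} \<longleftrightarrow> (\<exists>a. A = {a} \<and> h a = c)"
proof
  assume A: "h ` A = {c}"
  then obtain a where "a \<in> A" "h a = c" by (metis imageE insertI1)
  moreover have "b = a" if "b \<in> A" for b
  proof -
    have "h b = h a" using A that \<open>h a = c\<close> by (metis image_eqI singletonD)
    then show ?thesis using injD[OF assms] by blast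
  qed
  ultimately show "\<exists>a. A = {a} \<and> h a = c" by blast
next
  show "\<exists>a. A = {a} \<and> h a = c \<Longrightarrow> h ` A = {c}" by force
qed

lemma token_exchange_inj_image:
  assumes inj: "inj h" and P: "\<And>a b. P (h a) (h b) \<longleftrightarrow> P a b"
  shows "token_exchange P (h ` S) (h ` T) \<longleftrightarrow> token_exchange P S T"
proof
  assume "token_exchange P (h ` S) (h ` T)"
  then obtain c d where "h ` (S - T) = {c}" "h ` (T - S) = {d}" "P c d"
    by (auto simp: token_exchange_def image_set_diff[OF inj])
  then obtain a b where "S - T = {a}" "T - S = {b}" "P (h a) (h b)"
    unfolding inj_image_eq_singleton_iff[OF inj] by blast
  then show "token_exchange P S T" by (auto simp: token_exchange_def P)
next
  assume "token_exchange P S T"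
  then obtain a b where "S - T = {a}" "T - S = {b}" "P a b"
    by (auto simp: token_exchange_def)
  then have "h ` S - h ` T = {h a}" "h ` T - h ` S = {h b}" "P (h a) (h b)"
    by (auto simp: image_set_diff[OF inj, symmetric] P)
  then show "token_exchange P (h ` S) (h ` T)" by (auto simp: token_exchange_def)
qed

lemma token_exchange_insert:
  assumes "x \<notin> S" "x \<notin> T" and "\<And>a b. a \<noteq> x \<Longrightarrow> b \<noteq> x \<Longrightarrow> P a b \<longleftrightarrow> Q a b"
  shows "token_exchange P (insert x S) (insert x T) \<longleftrightarrow> token_exchange Q S T"
proof -
  have "insert x S - insert x T = S - T" "insert x T - insert x S = T - S"
    using assms(1,2) by auto
  moreover have "S - T = {a} \<Longrightarrow> a \<noteq> x" "T - S = {a} \<Longrightarrow> a \<noteq> x" for a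
    using assms(1,2) by auto
  ultimately show ?thesis
    unfolding token_exchange_def using assms(3) by metis
qed

lemma token_exchange_insert_insert:
  assumes "a \<noteq> b" "a \<notin> S" "b \<notin> S" "a \<notin> T" "b \<notin> T"
  shows "token_exchange P (insert a S) (insert b T) \<longleftrightarrow> S = T \<and> P a b"
proof -
  have diff: "insert a S - insert b T = insert a (S - T)" "insert b T - insert a S = insert b (T - S)"
    using assms by auto
  have "insert a (S - T) = {c} \<longleftrightarrow> c = a \<and> S - T = {}" for c
    using assms(2) by auto
  moreover have "insert b (T - S) = {d} \<longleftrightarrow> d = b \<and> T - S = {}" for d
    using assms(5) by auto
  ultimately show ?thesis
    unfolding token_exchange_def diff by auto
qed

(* With joined = True this is the adjacency of the product with P2, with joined = False that of
   two disjoint copies. *)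
definition copies_adj :: "('a \<Rightarrow> 'a \<Rightarrow> bool) \<Rightarrow> bool \<Rightarrow> 'a set \<times> 'b \<Rightarrow> 'a set \<times> 'b \<Rightarrow> bool" where
  "copies_adj Q joined p q \<longleftrightarrow>
    (snd p = snd q \<and> token_exchange Q (fst p) (fst q)) \<or> (joined \<and> fst p = fst q \<and> snd p \<noteq> snd q)"

lemma iso_quotient_graphI:
  assumes equiv: "equiv (verts K) R"
    and onto: "\<phi> ` verts K = verts H"
    and fibres: "\<And>p q. p \<in> verts K \<Longrightarrow> q \<in> verts K \<Longrightarrow> \<phi> p = \<phi> q \<longleftrightarrow> (p, q) \<in> R"
    and edges: "\<And>p q. p \<in> verts K \<Longrightarrow> q \<in> verts K \<Longrightarrow> adj H (\<phi> p) (\<phi> q) \<longleftrightarrow>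
      \<phi> p \<noteq> \<phi> q \<and> (\<exists>p'\<in>verts K. \<exists>q'\<in>verts K. \<phi> p' = \<phi> p \<and> \<phi> q' = \<phi> q \<and> adj K p' q')"
  shows "H \<cong>\<^sub>g quotient_graph K R"
proof -
  define fibre where "fibre S = {p \<in> verts K. \<phi> p = S}" for S
  have R_sub: "R \<subseteq> verts K \<times> verts K"
    using equiv by (simp add: equiv_def refl_on_def)
  have fibre_class: "fibre (\<phi> p) = R `` {p}" if "p \<in> verts K" for p
  proof (intro set_eqI)
    show "y \<in> fibre (\<phi> p) \<longleftrightarrow> y \<in> R `` {p}" for y
      using fibres[OF that, of y] R_sub by (auto simp: fibre_def)
  qed
  have fibre_in: "fibre (\<phi> p) \<in> verts K // R" if "p \<in> verts K" for p
    using that by (simp add: fibre_class quotientI)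
  have fibre_eq: "fibre (\<phi> p) = fibre (\<phi> q) \<longleftrightarrow> \<phi> p = \<phi> q" if "p \<in> verts K" "q \<in> verts K" for p q
    using that by (auto simp: fibre_def)
  have "bij_betw fibre (verts H) (verts K // R)"
  proof (rule bij_betw_imageI)
    show "inj_on fibre (verts H)"
    proof (rule inj_onI)
      fix S T assume ST: "S \<in> verts H" "T \<in> verts H" and "fibre S = fibre T"
      obtain p q where "p \<in> verts K" "q \<in> verts K" "S = \<phi> p" "T = \<phi> q"
        using ST unfolding onto[symmetric] by blast
      with \<open>fibre S = fibre T\<close> show "S = T" using fibre_eq by simp
    qed
    show "fibre ` verts H = verts K // R"
    proof
      show "fibre ` verts H \<subseteq> verts K // R"
        unfolding onto[symmetric] using fibre_in by auto
      show "verts K // R \<subseteq> fibre ` verts H"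
        using onto fibre_class by (auto elim!: quotientE)
    qed
  qed
  moreover have "adj H S T \<longleftrightarrow> adj (quotient_graph K R) (fibre S) (fibre T)"
    if ST: "S \<in> verts H" "T \<in> verts H" for S T
  proof -
    obtain p q where pq: "p \<in> verts K" "q \<in> verts K" "S = \<phi> p" "T = \<phi> q"
      using ST unfolding onto[symmetric] by blast
    have "adj (quotient_graph K R) (fibre S) (fibre T) \<longleftrightarrow>
        fibre S \<noteq> fibre T \<and> (\<exists>p'\<in>fibre S. \<exists>q'\<in>fibre T. adj K p' q')"
      using fibre_in pq by (simp add: quotient_graph_def)
    also have "\<dots> \<longleftrightarrow> S \<noteq> T \<and> (\<exists>p'\<in>verts K. \<exists>q'\<in>verts K. \<phi> p' = S \<and> \<phi> q' = T \<and> adj K p' q')"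
      using fibre_eq pq unfolding fibre_def by blast
    finally show ?thesis
      using edges pq by simp
  qed
  ultimately show ?thesis
    unfolding graph_iso_def by (auto simp: quotient_graph_def)
qed

lemma equiv_ident_rel: "equiv W (ident_rel W v)"
  by (auto simp: equiv_def refl_on_def sym_def trans_def ident_rel_def)

lemma adj_cart_prod_P2:
  assumes "p \<in> verts H \<times> {a, b}" "q \<in> verts H \<times> {a, b}" "a \<noteq> b"
  shows "adj (cart_prod H (P2 a b)) p q \<longleftrightarrow>
    (snd p = snd q \<and> adj H (fst p) (fst q)) \<or> (fst p = fst q \<and> snd p \<noteq> snd q)"
  using assms by (auto simp: cart_prod_def P2_def)

lemma adj_two_copies:
  assumes "p \<in> verts H \<times> {a, b}"
  shows "adj (two_copies H a b) p q \<longleftrightarrow> snd p = snd q \<and> adj H (fst p) (fst q)"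
  using assms by (auto simp: two_copies_def)

section \<open>Adding a twin\<close>

definition add_twin :: "sign \<Rightarrow> 'a graph \<Rightarrow> 'a \<Rightarrow> 'a \<Rightarrow> 'a graph" where
  "add_twin s G v x = (case s of Plus \<Rightarrow> add_twin_plus G v x | Minus \<Rightarrow> add_twin_minus G v x)"

locale twin_extension =
  fixes G :: "'a graph" and v x :: 'a
  assumes simple: "simple_graph G" and v_in: "v \<in> verts G" and x_notin: "x \<notin> verts G"
begin

abbreviation Gstar :: "sign \<Rightarrow> 'a graph" where
  "Gstar s \<equiv> add_twin s G v x"

abbreviation \<sigma> :: "'a \<Rightarrow> 'a" where
  "\<sigma> \<equiv> transpose v x"

lemma adj_G: "adj G a b \<Longrightarrow> a \<in> verts G \<and> b \<in> verts G \<and> a \<noteq> b \<and> adj G b a"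
  using simple by (auto simp: simple_graph_def)

lemma finite_verts: "finite (verts G)"
  using simple by (simp add: simple_graph_def)

lemma v_neq_x: "v \<noteq> x"
  using v_in x_notin by blast

lemma not_adj_x: "\<not> adj G a x" "\<not> adj G x a"
  using adj_G x_notin by blast+

lemma verts_Gstar: "verts (Gstar s) = insert x (verts G)"
  by (cases s) (simp_all add: add_twin_def add_twin_plus_def add_twin_minus_def)

lemma adj_Gstar: "adj (Gstar s) a b \<longleftrightarrow> adj G a b \<or>
    (a = x \<and> (adj G v b \<or> s = Plus \<and> b = v)) \<or> (b = x \<and> (adj G v a \<or> s = Plus \<and> a = v))"
  by (cases s) (auto simp: add_twin_def add_twin_plus_def add_twin_minus_def)

lemma adj_Gstar_off_x: "a \<noteq> x \<Longrightarrow> b \<noteq> x \<Longrightarrow> adj (Gstar s) a b \<longleftrightarrow> adj G a b"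
  by (simp add: adj_Gstar)

lemma adj_Gstar_sym: "adj (Gstar s) a b \<longleftrightarrow> adj (Gstar s) b a"
  by (auto simp: adj_Gstar dest: adj_G)

lemma adj_Gstar_x_v: "adj (Gstar s) x v \<longleftrightarrow> s = Plus"
  by (auto simp: adj_Gstar not_adj_x dest: adj_G)

lemma adj_Gstar_transpose: "adj (Gstar s) (\<sigma> a) (\<sigma> b) \<longleftrightarrow> adj (Gstar s) a b"
  using v_neq_x
  by (cases "a = v"; cases "a = x"; cases "b = v"; cases "b = x")
    (auto simp: adj_Gstar not_adj_x dest: adj_G)

lemma transpose_verts_Gstar: "\<sigma> ` verts (Gstar s) = verts (Gstar s)"
  by (rule transpose_image_eq) (simp add: verts_Gstar v_in)

lemma forcing_set_Gstar_transpose: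
  "forcing_set s (Gstar s) T \<Longrightarrow> forcing_set s (Gstar s) (\<sigma> ` T)"
  by (rule forcing_set_bij_image[OF bij_transpose adj_Gstar_transpose transpose_verts_Gstar[symmetric]])

lemma comp_minus_Gstar:
  assumes "x \<notin> B"
  shows "comp_minus (Gstar s) (insert x B) w = comp_minus G B w"
proof -
  have "(\<lambda>a b. adj (Gstar s) a b \<and> a \<notin> insert x B \<and> b \<notin> insert x B) =
      (\<lambda>a b. adj G a b \<and> a \<notin> B \<and> b \<notin> B)"
    by (intro ext) (auto simp: adj_Gstar not_adj_x)
  then show ?thesis by (simp add: comp_minus_def)
qed

lemma nbhd_Gstar: "u \<noteq> x \<Longrightarrow> nbhd (Gstar s) u - {x} = nbhd G u"
  by (auto simp: nbhd_def adj_Gstar not_adj_x)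

lemma forces_Gstar_iff:
  assumes "x \<notin> B" "u \<noteq> x" "w \<notin> B" "w \<noteq> x"
  shows "forces s (Gstar s) (insert x B) u w \<longleftrightarrow> forces s G B u w"
proof (cases s)
  case Plus
  have "x \<notin> comp_minus G B w"
    using comp_minus_disjoint[of w "insert x B" "Gstar s"] assms comp_minus_Gstar by auto
  then have "nbhd (Gstar s) u \<inter> comp_minus G B w = nbhd G u \<inter> comp_minus G B w"
    using nbhd_Gstar[OF assms(2)] by blast
  then show ?thesis
    using Plus assms by (simp add: forces_def comp_minus_Gstar)
next
  case Minus
  have "{y. adj (Gstar s) u y \<and> y \<notin> insert x B} = {y. adj G u y \<and> y \<notin> B}"
    using assms(2) by (auto simp: adj_Gstar not_adj_x)
  then show ?thesis
    using Minus by (simp add: forces_def)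
qed

lemma ex_forces_if_forces_by_x:
  assumes ok: "s = Plus \<longrightarrow> \<not> isolated G v" and B: "x \<notin> B" "w \<notin> B"
    and force: "forces s (Gstar s) (insert x B) x w"
  shows "\<exists>u\<in>verts G. forces s G B u w"
proof (cases s)
  case Minus
  have "{y. adj (Gstar s) x y \<and> y \<notin> insert x B} = {y. adj G v y \<and> y \<notin> B}"
    using Minus by (auto simp: adj_Gstar not_adj_x)
  then have "forces s G B v w"
    using force Minus by (simp add: forces_def)
  then show ?thesis using v_in by blast
next
  case Plus
  let ?C = "comp_minus G B w"
  have "nbhd (Gstar s) x = insert v (nbhd G v)"
    using Plus by (auto simp: nbhd_def adj_Gstar not_adj_x dest: adj_G)
  then have C: "insert v (nbhd G v) \<inter> ?C = {w}"
    using force Plus by (simp add: forces_def comp_minus_Gstar B(1))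
  show ?thesis
  proof (cases "v \<in> B")
    case True
    then have "v \<notin> ?C" using comp_minus_disjoint[OF B(2)] by blast
    then have "forces s G B v w" using C Plus True by (auto simp: forces_def)
    then show ?thesis using v_in by blast
  next
    case False
    then have "w = v" "nbhd G v \<subseteq> B"
      using closed_nbhd_Int_comp_minus_eq_singletonD[OF simple False B(2) C] by auto
    then show ?thesis
      using ex_forces_Plus_if_nbhd_blue[OF simple _ False] ok Plus by simp
  qed
qed

lemma force_step_insert_twin:
  assumes "force_step s G B w" "x \<notin> B"
  shows "force_step s (Gstar s) (insert x B) w"
proof -
  obtain u where w: "w \<in> verts G" "w \<notin> B" and u: "u \<in> verts G" "forces s G B u w"
    using assms(1) by (auto simp: force_step_iff_forces)
  then have "forces s (Gstar s) (insert x B) u w"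
    using forces_Gstar_iff[OF assms(2)] x_notin by (metis (no_types))
  then show ?thesis
    using w u x_notin unfolding force_step_iff_forces verts_Gstar by blast
qed

lemma force_step_remove_twin:
  assumes ok: "s = Plus \<longrightarrow> \<not> isolated G v"
    and "x \<notin> B" "force_step s (Gstar s) (insert x B) w"
  shows "force_step s G B w"
proof -
  obtain u where w: "w \<in> verts G" "w \<notin> B" and u: "u \<in> insert x (verts G)"
    and force: "forces s (Gstar s) (insert x B) u w"
    using assms(3) by (auto simp: force_step_iff_forces verts_Gstar)
  have "\<exists>u\<in>verts G. forces s G B u w"
  proof (cases "u = x")
    case True
    then show ?thesis using ex_forces_if_forces_by_x[OF ok assms(2) w(2)] force by simp
  next
    case False
    then show ?thesis using u force forces_Gstar_iff[OF assms(2) False w(2)] w(1) x_notin by auto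
  qed
  then show ?thesis using w by (simp add: force_step_iff_forces)
qed

lemma reachable_blue_insert_twin:
  "reachable_blue s G S B \<Longrightarrow> S \<subseteq> verts G \<Longrightarrow>
    reachable_blue s (Gstar s) (insert x S) (insert x B)"
proof (induction rule: reachable_blue.induct)
  case (step B w)
  then have "x \<notin> B" using reachable_blue_subset x_notin by blast
  with step have "reachable_blue s (Gstar s) (insert x S) (insert w (insert x B))"
    by (simp add: force_step_insert_twin reachable_blue.step)
  then show ?case by (simp add: insert_commute)
qed (rule reachable_blue.start)

lemma reachable_blue_remove_twin:
  assumes ok: "s = Plus \<longrightarrow> \<not> isolated G v"
  shows "reachable_blue s (Gstar s) T B \<Longrightarrow> x \<in> T \<Longrightarrow>
    x \<in> B \<and> reachable_blue s G (T - {x}) (B - {x})"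
proof (induction rule: reachable_blue.induct)
  case (step B w)
  then have "x \<in> B" "w \<noteq> x" by (auto simp: force_step_def)
  then have "force_step s G (B - {x}) w"
    using force_step_remove_twin[OF ok, of "B - {x}"] step.hyps(2) by (simp add: insert_absorb)
  then show ?case
    using step \<open>x \<in> B\<close> \<open>w \<noteq> x\<close> by (simp add: insert_Diff_if reachable_blue.step)
qed (simp add: reachable_blue.start)

lemma forcing_set_insert_twin:
  "forcing_set s G B \<Longrightarrow> forcing_set s (Gstar s) (insert x B)"
  by (auto simp: forcing_set_def verts_Gstar reachable_blue_insert_twin)

lemma forcing_set_remove_twin:
  "s = Plus \<longrightarrow> \<not> isolated G v \<Longrightarrow> forcing_set s (Gstar s) T \<Longrightarrow> x \<in> T \<Longrightarrow>
    forcing_set s G (T - {x})"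
  using reachable_blue_remove_twin[of s T "verts (Gstar s)"] x_notin
  by (auto simp: forcing_set_def verts_Gstar)

lemma twin_not_forced:
  assumes force: "forces s (Gstar s) B u w" and white: "v \<notin> B" "x \<notin> B"
  shows "w \<noteq> v \<and> w \<noteq> x"
proof (rule ccontr)
  assume "\<not> (w \<noteq> v \<and> w \<noteq> x)"
  then have w: "w \<in> {v, x}" "w \<notin> B" using white by auto
  define t where "t = \<sigma> w"
  have t: "t \<in> {v, x}" "t \<noteq> w" "t \<notin> B"
    using w white v_neq_x by (auto simp: t_def)
  have twins: "adj (Gstar s) a t \<longleftrightarrow> adj (Gstar s) a w" if "a \<notin> {v, x}" for a
    using adj_Gstar_transpose[of s a w] that by (simp add: t_def)
  show False
  proof (cases s)
    case Minus
    then have white_nbhd: "{y. adj (Gstar s) u y \<and> y \<notin> B} = {w}"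
      using force by (simp add: forces_def)
    then have "adj (Gstar s) u w" by blast
    moreover have "u \<notin> {v, x}"
      using calculation w Minus by (auto simp: adj_Gstar not_adj_x dest: adj_G)
    ultimately have "t \<in> {y. adj (Gstar s) u y \<and> y \<notin> B}"
      using twins t by simp
    then show False using white_nbhd t by blast
  next
    case Plus
    then have "u \<in> B" and C: "nbhd (Gstar s) u \<inter> comp_minus (Gstar s) B w = {w}"
      using force by (auto simp: forces_def)
    then have "adj (Gstar s) u t"
      using white twins[of u] by (auto simp: nbhd_def)
    moreover have "t \<in> comp_minus (Gstar s) B w"
    proof -
      have "adj (Gstar s) w t" using w t Plus by (auto simp: adj_Gstar)
      from comp_minus_step[OF self_in_comp_minus this w(2) t(3)] show ?thesis .
    qed
    ultimately have "t \<in> nbhd (Gstar s) u \<inter> comp_minus (Gstar s) B w"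
      by (simp add: nbhd_def)
    then show False using C t(2) by simp
  qed
qed

lemma reachable_blue_twins_white:
  "reachable_blue s (Gstar s) S B \<Longrightarrow> v \<notin> S \<Longrightarrow> x \<notin> S \<Longrightarrow> v \<notin> B \<and> x \<notin> B"
  by (induction rule: reachable_blue.induct) (auto simp: force_step_iff_forces dest: twin_not_forced)

lemma forcing_set_Gstar_meets_twins: "forcing_set s (Gstar s) T \<Longrightarrow> v \<in> T \<or> x \<in> T"
  using reachable_blue_twins_white[of s T "verts (Gstar s)"]
  by (auto simp: forcing_set_def verts_Gstar)

section \<open>Minimum forcing sets of the extended graph\<close>

definition lift :: "'a set \<times> 'a \<Rightarrow> 'a set" where
  "lift p = transpose v (snd p) ` insert x (fst p)"

lemma lift_v: "lift (B, v) = insert x B"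
  by (simp add: lift_def)

lemma lift_x: "lift (B, x) = \<sigma> ` lift (B, v)"
  by (simp add: lift_def)

lemma lift_x_eq:
  assumes "x \<notin> B"
  shows "lift (B, x) = (if v \<in> B then insert x B else insert v B)"
proof (cases "v \<in> B")
  case True
  then have "\<sigma> ` insert x B = insert x B" by (intro transpose_image_eq) simp
  then show ?thesis using True by (simp add: lift_x lift_v del: image_insert)
next
  case False
  then have "\<sigma> ` B = B" using assms by (simp add: transpose_image_eq)
  then show ?thesis using False by (simp add: lift_x lift_v)
qed

lemma card_lift:
  assumes "B \<subseteq> verts G"
  shows "card (lift (B, a)) = Suc (card B)"
proof -
  have "card (lift (B, a)) = card (insert x B)"
    unfolding lift_def by (simp add: card_image[OF inj_on_transpose] del: image_insert)
  also have "\<dots> = Suc (card B)"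
    using finite_subset[OF assms finite_verts] assms x_notin by (subst card_insert_disjoint) auto
  finally show ?thesis .
qed

lemma forcing_set_lift:
  assumes "forcing_set s G B" "a \<in> {v, x}"
  shows "forcing_set s (Gstar s) (lift (B, a))"
proof -
  have "forcing_set s (Gstar s) (lift (B, v))"
    using forcing_set_insert_twin[OF assms(1)] by (simp add: lift_v)
  then show ?thesis
    using assms(2) forcing_set_Gstar_transpose by (auto simp only: lift_x insert_iff singleton_iff)
qed

lemma forcing_set_Gstar_cases:
  assumes ok: "s = Plus \<longrightarrow> \<not> isolated G v" and T: "forcing_set s (Gstar s) T"
  obtains B a where "forcing_set s G B" "a \<in> {v, x}" "T = lift (B, a)"
proof (cases "x \<in> T")
  case True
  then have "T = lift (T - {x}, v)" by (auto simp: lift_v)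
  then show ?thesis using that forcing_set_remove_twin[OF ok T True] by blast
next
  case False
  then have "x \<in> \<sigma> ` T"
    using forcing_set_Gstar_meets_twins[OF T] by (simp add: in_transpose_image_iff)
  then have "forcing_set s G (\<sigma> ` T - {x})"
    using forcing_set_remove_twin[OF ok forcing_set_Gstar_transpose[OF T]] by blast
  moreover have "T = lift (\<sigma> ` T - {x}, x)"
    using \<open>x \<in> \<sigma> ` T\<close> by (simp add: lift_x lift_v insert_absorb image_image)
  ultimately show ?thesis using that by blast
qed

lemma zf_number_Gstar:
  assumes ok: "s = Plus \<longrightarrow> \<not> isolated G v"
  shows "zf_number s (Gstar s) = Suc (zf_number s G)"
proof (rule antisym)
  obtain B where "B \<in> min_forcing_sets s G"
    using min_forcing_sets_nonempty by blast
  then have B: "forcing_set s G B" "card B = zf_number s G" "B \<subseteq> verts G"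
    by (auto simp: min_forcing_sets_def forcing_set_def)
  show "zf_number s (Gstar s) \<le> Suc (zf_number s G)"
    using zf_number_le_card[OF forcing_set_lift[OF B(1), of v]] card_lift[OF B(3)] B(2) by simp
next
  obtain T where "T \<in> min_forcing_sets s (Gstar s)"
    using min_forcing_sets_nonempty by blast
  then have T: "forcing_set s (Gstar s) T" "card T = zf_number s (Gstar s)"
    by (auto simp: min_forcing_sets_def)
  obtain B a where B: "forcing_set s G B" "T = lift (B, a)"
    using forcing_set_Gstar_cases[OF ok T(1)] by metis
  have "card T = Suc (card B)"
    using B card_lift by (simp add: forcing_set_def)
  then show "Suc (zf_number s G) \<le> zf_number s (Gstar s)"
    using zf_number_le_card[OF B(1)] T(2) by simp
qed

lemma min_forcing_sets_Gstar:
  assumes ok: "s = Plus \<longrightarrow> \<not> isolated G v"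
  shows "min_forcing_sets s (Gstar s) = lift ` (min_forcing_sets s G \<times> {v, x})"
proof
  show "min_forcing_sets s (Gstar s) \<subseteq> lift ` (min_forcing_sets s G \<times> {v, x})"
  proof
    fix T assume "T \<in> min_forcing_sets s (Gstar s)"
    then have T: "forcing_set s (Gstar s) T" "card T = Suc (zf_number s G)"
      by (auto simp: min_forcing_sets_def zf_number_Gstar[OF ok])
    obtain B a where B: "forcing_set s G B" "a \<in> {v, x}" "T = lift (B, a)"
      using forcing_set_Gstar_cases[OF ok T(1)] by metis
    then have "B \<in> min_forcing_sets s G"
      using T(2) card_lift by (simp add: min_forcing_sets_def forcing_set_def)
    then show "T \<in> lift ` (min_forcing_sets s G \<times> {v, x})"
      using B by blast
  qed
  show "lift ` (min_forcing_sets s G \<times> {v, x}) \<subseteq> min_forcing_sets s (Gstar s)"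
    using forcing_set_lift card_lift
    by (auto simp: min_forcing_sets_def zf_number_Gstar[OF ok] forcing_set_def)
qed

lemma lift_eq_iff:
  assumes "x \<notin> B1" "x \<notin> B2" "a1 \<in> {v, x}" "a2 \<in> {v, x}"
  shows "lift (B1, a1) = lift (B2, a2) \<longleftrightarrow> B1 = B2 \<and> (a1 = a2 \<or> v \<in> B1)"
  using assms v_neq_x by (auto simp: lift_x_eq lift_v insert_ident split: if_split_asm)

section \<open>Token graphs of the extended graph\<close>

lemma token_exchange_lift_same_label:
  assumes P_transpose: "\<And>a b. P (\<sigma> a) (\<sigma> b) \<longleftrightarrow> P a b"
    and P_eq_Q: "\<And>a b. a \<noteq> x \<Longrightarrow> b \<noteq> x \<Longrightarrow> P a b \<longleftrightarrow> Q a b"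
    and B: "x \<notin> B1" "x \<notin> B2" and a: "a \<in> {v, x}"
  shows "token_exchange P (lift (B1, a)) (lift (B2, a)) \<longleftrightarrow> token_exchange Q B1 B2"
proof -
  have "token_exchange P (lift (B1, a)) (lift (B2, a)) \<longleftrightarrow>
      token_exchange P (insert x B1) (insert x B2)"
    using a token_exchange_inj_image[of \<sigma> P, OF inj_transpose P_transpose]
    by (auto simp only: lift_x lift_v insert_iff singleton_iff)
  also have "\<dots> \<longleftrightarrow> token_exchange Q B1 B2"
    by (rule token_exchange_insert[of x B1 B2 P Q, OF B P_eq_Q])
  finally show ?thesis .
qed

lemma token_exchange_lift_other_label:
  assumes P_sym: "P v x \<longleftrightarrow> P x v"
    and B: "x \<notin> B1" "x \<notin> B2" "v \<notin> B1" "v \<notin> B2"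
    and a: "a1 \<in> {v, x}" "a2 \<in> {v, x}" "a1 \<noteq> a2"
  shows "token_exchange P (lift (B1, a1)) (lift (B2, a2)) \<longleftrightarrow> B1 = B2 \<and> P x v"
proof (cases "a1 = v")
  case True
  then have "a2 = x" using a by auto
  then show ?thesis
    using True B v_neq_x by (simp add: lift_v lift_x_eq token_exchange_insert_insert)
next
  case False
  then have "a1 = x" "a2 = v" using a by auto
  then show ?thesis
    using B v_neq_x P_sym by (simp add: lift_v lift_x_eq token_exchange_insert_insert)
qed

lemma token_exchange_lift_if_copies_adj:
  assumes P_transpose: "\<And>a b. P (\<sigma> a) (\<sigma> b) \<longleftrightarrow> P a b"
    and P_eq_Q: "\<And>a b. a \<noteq> x \<Longrightarrow> b \<noteq> x \<Longrightarrow> P a b \<longleftrightarrow> Q a b"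
    and P_sym: "P v x \<longleftrightarrow> P x v"
    and B: "x \<notin> B1" "x \<notin> B2" and a: "a1 \<in> {v, x}" "a2 \<in> {v, x}"
    and adj: "copies_adj Q (P x v) (B1, a1) (B2, a2)"
    and neq: "lift (B1, a1) \<noteq> lift (B2, a2)"
  shows "token_exchange P (lift (B1, a1)) (lift (B2, a2))"
proof (cases "a1 = a2")
  case True
  then show ?thesis
    using adj token_exchange_lift_same_label[of P Q, OF P_transpose P_eq_Q B a(1)]
    by (simp add: copies_adj_def)
next
  case False
  then have "B1 = B2" "P x v" using adj by (auto simp: copies_adj_def)
  moreover have "v \<notin> B1"
    using neq lift_eq_iff[OF B a] \<open>B1 = B2\<close> by blast
  ultimately show ?thesis
    using token_exchange_lift_other_label[of P, OF P_sym B] a False by simp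
qed

lemma copies_adj_if_token_exchange_lift:
  assumes P_transpose: "\<And>a b. P (\<sigma> a) (\<sigma> b) \<longleftrightarrow> P a b"
    and P_eq_Q: "\<And>a b. a \<noteq> x \<Longrightarrow> b \<noteq> x \<Longrightarrow> P a b \<longleftrightarrow> Q a b"
    and P_sym: "P v x \<longleftrightarrow> P x v"
    and B: "x \<notin> B1" "x \<notin> B2" and a: "a1 \<in> {v, x}" "a2 \<in> {v, x}"
    and exchange: "token_exchange P (lift (B1, a1)) (lift (B2, a2))"
  shows "\<exists>a1'\<in>{v, x}. \<exists>a2'\<in>{v, x}. lift (B1, a1') = lift (B1, a1) \<and>
    lift (B2, a2') = lift (B2, a2) \<and> copies_adj Q (P x v) (B1, a1') (B2, a2')"
proof -
  have same_label: "copies_adj Q (P x v) (B1, a) (B2, a)"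
    if "a \<in> {v, x}" "lift (B1, a) = lift (B1, a1)" "lift (B2, a) = lift (B2, a2)" for a
    using exchange that token_exchange_lift_same_label[of P Q, OF P_transpose P_eq_Q B that(1)]
    by (simp add: copies_adj_def)
  consider "a1 = a2" | "v \<in> B1" | "v \<in> B2" | "a1 \<noteq> a2" "v \<notin> B1" "v \<notin> B2"
    by blast
  then show ?thesis
  proof cases
    case 1
    then show ?thesis using same_label a by blast
  next
    case 2
    then have "lift (B1, a2) = lift (B1, a1)" using lift_eq_iff B a by blast
    then show ?thesis using same_label a by blast
  next
    case 3
    then have "lift (B2, a1) = lift (B2, a2)" using lift_eq_iff B a by blast
    then show ?thesis using same_label a by blast
  next
    case 4
    then have "B1 = B2 \<and> P x v"
      using exchange token_exchange_lift_other_label[of P, OF P_sym B] a by blast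
    then show ?thesis using a 4 by (auto simp: copies_adj_def)
  qed
qed

lemma token_exchange_lift_iff:
  assumes P_transpose: "\<And>a b. P (\<sigma> a) (\<sigma> b) \<longleftrightarrow> P a b"
    and P_eq_Q: "\<And>a b. a \<noteq> x \<Longrightarrow> b \<noteq> x \<Longrightarrow> P a b \<longleftrightarrow> Q a b"
    and P_sym: "P v x \<longleftrightarrow> P x v"
    and \<B>: "\<And>B. B \<in> \<B> \<Longrightarrow> x \<notin> B" and pq: "p \<in> \<B> \<times> {v, x}" "q \<in> \<B> \<times> {v, x}"
  shows "token_exchange P (lift p) (lift q) \<longleftrightarrow> lift p \<noteq> lift q \<and>
    (\<exists>p'\<in>\<B> \<times> {v, x}. \<exists>q'\<in>\<B> \<times> {v, x}.
      lift p' = lift p \<and> lift q' = lift q \<and> copies_adj Q (P x v) p' q')"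
proof
  assume exchange: "token_exchange P (lift p) (lift q)"
  have p: "fst p \<in> \<B>" "snd p \<in> {v, x}" and q: "fst q \<in> \<B>" "snd q \<in> {v, x}"
    using pq by auto
  have "\<exists>a1\<in>{v, x}. \<exists>a2\<in>{v, x}. lift (fst p, a1) = lift p \<and> lift (fst q, a2) = lift q \<and>
      copies_adj Q (P x v) (fst p, a1) (fst q, a2)"
    using copies_adj_if_token_exchange_lift[OF P_transpose P_eq_Q P_sym \<B>[OF p(1)] \<B>[OF q(1)] p(2) q(2)]
      exchange by simp
  then show "lift p \<noteq> lift q \<and> (\<exists>p'\<in>\<B> \<times> {v, x}. \<exists>q'\<in>\<B> \<times> {v, x}.
      lift p' = lift p \<and> lift q' = lift q \<and> copies_adj Q (P x v) p' q')"
    using token_exchange_neq[OF exchange] p(1) q(1) by blast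
next
  assume "lift p \<noteq> lift q \<and> (\<exists>p'\<in>\<B> \<times> {v, x}. \<exists>q'\<in>\<B> \<times> {v, x}.
      lift p' = lift p \<and> lift q' = lift q \<and> copies_adj Q (P x v) p' q')"
  then obtain p' q' where "p' \<in> \<B> \<times> {v, x}" "q' \<in> \<B> \<times> {v, x}"
      and lift: "lift p' = lift p" "lift q' = lift q" and "copies_adj Q (P x v) p' q'" "lift p \<noteq> lift q"
    by blast
  moreover from this(1,2) have p': "fst p' \<in> \<B>" "snd p' \<in> {v, x}" and q': "fst q' \<in> \<B>" "snd q' \<in> {v, x}"
    by (simp_all add: mem_Times_iff)
  ultimately have "token_exchange P (lift p') (lift q')"
    using token_exchange_lift_if_copies_adj[OF P_transpose P_eq_Q P_sym \<B>[OF p'(1)] \<B>[OF q'(1)] p'(2) q'(2)]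
    by simp
  then show "token_exchange P (lift p) (lift q)" using lift by simp
qed

lemma token_graph_Gstar_iso:
  assumes ok: "s = Plus \<longrightarrow> \<not> isolated G v"
    and P_transpose: "\<And>a b. P (\<sigma> a) (\<sigma> b) \<longleftrightarrow> P a b"
    and P_eq_Q: "\<And>a b. a \<noteq> x \<Longrightarrow> b \<noteq> x \<Longrightarrow> P a b \<longleftrightarrow> Q a b"
    and P_sym: "P v x \<longleftrightarrow> P x v"
    and verts_K: "verts K = min_forcing_sets s G \<times> {v, x}"
    and adj_K: "\<And>p q. p \<in> verts K \<Longrightarrow> q \<in> verts K \<Longrightarrow> adj K p q \<longleftrightarrow> copies_adj Q (P x v) p q"
  shows "token_graph P s (Gstar s) \<cong>\<^sub>g quotient_graph K (ident_rel (verts K) v)"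
proof (rule iso_quotient_graphI)
  have x_notin_min: "x \<notin> B" if "B \<in> min_forcing_sets s G" for B
    using that x_notin by (auto simp: min_forcing_sets_def forcing_set_def)
  show "equiv (verts K) (ident_rel (verts K) v)"
    by (rule equiv_ident_rel)
  show onto: "lift ` verts K = verts (token_graph P s (Gstar s))"
    by (simp add: verts_K min_forcing_sets_Gstar[OF ok])
  show "lift p = lift q \<longleftrightarrow> (p, q) \<in> ident_rel (verts K) v"
    if "p \<in> verts K" "q \<in> verts K" for p q
    using that x_notin_min lift_eq_iff[of "fst p" "fst q" "snd p" "snd q"]
    by (auto simp: verts_K ident_rel_def prod_eq_iff)
  show "adj (token_graph P s (Gstar s)) (lift p) (lift q) \<longleftrightarrow> lift p \<noteq> lift q \<and>
      (\<exists>p'\<in>verts K. \<exists>q'\<in>verts K. lift p' = lift p \<and> lift q' = lift q \<and> adj K p' q')"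
    if pq: "p \<in> verts K" "q \<in> verts K" for p q
  proof -
    have "lift p \<in> min_forcing_sets s (Gstar s)" "lift q \<in> min_forcing_sets s (Gstar s)"
      using onto pq by auto
    then have "adj (token_graph P s (Gstar s)) (lift p) (lift q) \<longleftrightarrow> token_exchange P (lift p) (lift q)"
      by simp
    also have "\<dots> \<longleftrightarrow> lift p \<noteq> lift q \<and> (\<exists>p'\<in>verts K. \<exists>q'\<in>verts K.
        lift p' = lift p \<and> lift q' = lift q \<and> copies_adj Q (P x v) p' q')"
      using token_exchange_lift_iff[OF P_transpose P_eq_Q P_sym x_notin_min] pq
      by (simp add: verts_K)
    also have "\<dots> \<longleftrightarrow> lift p \<noteq> lift q \<and> (\<exists>p'\<in>verts K. \<exists>q'\<in>verts K.
        lift p' = lift p \<and> lift q' = lift q \<and> adj K p' q')"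
      using adj_K by auto
    finally show ?thesis .
  qed
qed

lemma verts_cart_prod_token_graph:
  "verts (cart_prod (token_graph Q s G) (P2 v x)) = min_forcing_sets s G \<times> {v, x}"
  by (simp add: cart_prod_def P2_def)

lemma verts_two_copies_token_graph:
  "verts (two_copies (token_graph Q s G) v x) = min_forcing_sets s G \<times> {v, x}"
  by (simp add: two_copies_def)

lemma adj_cart_prod_token_graph:
  assumes "p \<in> min_forcing_sets s G \<times> {v, x}" "q \<in> min_forcing_sets s G \<times> {v, x}"
  shows "adj (cart_prod (token_graph Q s G) (P2 v x)) p q \<longleftrightarrow> copies_adj Q True p q"
  using adj_cart_prod_P2[of p "token_graph Q s G" v x q] assms v_neq_x
  by (auto simp: copies_adj_def)

lemma adj_two_copies_token_graph:
  assumes "p \<in> min_forcing_sets s G \<times> {v, x}" "q \<in> min_forcing_sets s G \<times> {v, x}"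
  shows "adj (two_copies (token_graph Q s G) v x) p q \<longleftrightarrow> copies_adj Q False p q"
  using adj_two_copies[of p "token_graph Q s G" v x q] assms
  by (auto simp: copies_adj_def)

lemma ZTE_Gstar_iso:
  assumes "s = Plus \<longrightarrow> \<not> isolated G v"
  shows "ZTE s (Gstar s) \<cong>\<^sub>g quotient_graph (cart_prod (ZTE s G) (P2 v x))
    (ident_rel (verts (cart_prod (ZTE s G) (P2 v x))) v)"
  unfolding ZTE_eq_token_graph
  by (rule token_graph_Gstar_iso[OF assms])
    (simp_all add: verts_cart_prod_token_graph adj_cart_prod_token_graph)

lemma ZTS_Plus_Gstar_iso:
  assumes "\<not> isolated G v"
  shows "ZTS Plus (Gstar Plus) \<cong>\<^sub>g quotient_graph (cart_prod (ZTS Plus G) (P2 v x))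
    (ident_rel (verts (cart_prod (ZTS Plus G) (P2 v x))) v)"
  unfolding ZTS_eq_token_graph
  by (rule token_graph_Gstar_iso[where P = "adj (Gstar Plus)" and Q = "adj G",
        OF _ adj_Gstar_transpose adj_Gstar_off_x adj_Gstar_sym])
    (simp_all add: assms adj_Gstar_x_v verts_cart_prod_token_graph adj_cart_prod_token_graph)

lemma ZTS_Minus_Gstar_iso:
  "ZTS Minus (Gstar Minus) \<cong>\<^sub>g quotient_graph (two_copies (ZTS Minus G) v x)
    (ident_rel (verts (two_copies (ZTS Minus G) v x)) v)"
  unfolding ZTS_eq_token_graph
  by (rule token_graph_Gstar_iso[where P = "adj (Gstar Minus)" and Q = "adj G",
        OF _ adj_Gstar_transpose adj_Gstar_off_x adj_Gstar_sym])
    (simp_all add: adj_Gstar_x_v verts_two_copies_token_graph adj_two_copies_token_graph)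

end

theorem theorem6p14:
  fixes G :: "'a graph" and v x :: 'a
  assumes "simple_graph G" and "v \<in> verts G" and "x \<notin> verts G"
  shows "(\<forall>s. (s = Plus \<longrightarrow> \<not> isolated G v) \<longrightarrow>
            ZTE s (case s of Plus \<Rightarrow> add_twin_plus G v x | Minus \<Rightarrow> add_twin_minus G v x)
            \<cong>\<^sub>g quotient_graph (cart_prod (ZTE s G) (P2 v x))
                   (ident_rel (verts (cart_prod (ZTE s G) (P2 v x))) v))
       \<and> (\<not> isolated G v \<longrightarrow>
            ZTS Plus (add_twin_plus G v x)
            \<cong>\<^sub>g quotient_graph (cart_prod (ZTS Plus G) (P2 v x))
                   (ident_rel (verts (cart_prod (ZTS Plus G) (P2 v x))) v))
       \<and> ZTS Minus (add_twin_minus G v x)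
            \<cong>\<^sub>g quotient_graph (two_copies (ZTS Minus G) v x)
                   (ident_rel (verts (two_copies (ZTS Minus G) v x)) v)"
proof -
  interpret twin_extension G v x
    using assms by unfold_locales
  show ?thesis
    using ZTE_Gstar_iso ZTS_Plus_Gstar_iso ZTS_Minus_Gstar_iso
    by (simp add: add_twin_def)
qed

end
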